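(* Let $S$ be a quasi-thin scheme on $X$, let $\mathbb F$ be a field of characteristic $p$, $x\in X$, and $\mathcal T=\mathcal T(x)$ the Terwilliger $\mathbb F$-algebra of $S$ with respect to $x$. Then $\mathcal T$ is semisimple if and only if either $p\neq 2$, or $p=2$ and $S$ is a thin scheme.
   Context: Let $\mathbb{F}$ be a field of characteristic $p$ ($p=0$ or a prime) and $X$ a nonempty finite set. A scheme of class $d$ on $X$ is a partition $S=\{R_0,\dots,R_d\}$ of $X\times X$ into nonempty sets such that $R_0=\{(b,b):b\in X\}$; for each $c$ there is $c'$ with $R_{c'}=\{(f,e):(e,f)\in R_c\}$; and for all $i,j,k$ the intersection number $p_{ij}^k=|\{\ell\in X:(m,\ell)\in R_i,(\ell,n)\in R_j\}|$ does not depend on $(m,n)\in R_k$. The valency of $R_a$ is $k_a=p_{aa'}^0$. $S$ is thin if all $k_a=1$ and quasi-thin if all $k_a\le 2$. For $y\in X$, $yR_a=\{z:(y,z)\in R_a\}$. $A_a\in M_X(\mathbb F)$ is the $(0,1)$ adjacency matrix of $R_a$ and $E_a^*(y)$ is the diagonal $(0,1)$-matrix with ones exactly at the diagonal positions indexed by $yR_a$. The Terwilliger $\mathbb F$-algebra $\mathcal T(y)$ is the $\mathbb F$-subalgebra of $M_X(\mathbb F)$ generated by $A_0,\dots,A_d,E_0^*(y),\dots,E_d^*(y)$. *)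

theory Defs
  imports Main
begin

text \<open>The finite set X is the (finite, nonempty) universe of the type 'x.
  Matrices in M_X(F) are functions 'x => 'x => 'a.\<close>

type_synonym ('x, 'a) xmat = "'x \<Rightarrow> 'x \<Rightarrow> 'a"

definition mat_add :: "('x, 'a::field) xmat \<Rightarrow> ('x, 'a) xmat \<Rightarrow> ('x, 'a) xmat" where
  "mat_add A B = (\<lambda>i j. A i j + B i j)"

definition mat_smult :: "'a::field \<Rightarrow> ('x, 'a) xmat \<Rightarrow> ('x, 'a) xmat" where
  "mat_smult c A = (\<lambda>i j. c * A i j)"

definition mat_mult :: "('x::finite, 'a::field) xmat \<Rightarrow> ('x, 'a) xmat \<Rightarrow> ('x, 'a) xmat" where
  "mat_mult A B = (\<lambda>i j. \<Sum>k\<in>UNIV. A i k * B k j)"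

definition mat_zero :: "('x, 'a::field) xmat" where
  "mat_zero = (\<lambda>i j. 0)"

definition mat_one :: "('x, 'a::field) xmat" where
  "mat_one = (\<lambda>i j. if i = j then 1 else 0)"

inductive_set gen_algebra :: "('x::finite, 'a::field) xmat set \<Rightarrow> ('x, 'a) xmat set"
  for G where
  gen: "A \<in> G \<Longrightarrow> A \<in> gen_algebra G"
| one: "mat_one \<in> gen_algebra G"
| add: "A \<in> gen_algebra G \<Longrightarrow> B \<in> gen_algebra G \<Longrightarrow> mat_add A B \<in> gen_algebra G"
| smult: "A \<in> gen_algebra G \<Longrightarrow> mat_smult c A \<in> gen_algebra G"
| mult: "A \<in> gen_algebra G \<Longrightarrow> B \<in> gen_algebra G \<Longrightarrow> mat_mult A B \<in> gen_algebra G"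

definition left_ideal :: "('x::finite, 'a::field) xmat set \<Rightarrow> ('x, 'a) xmat set \<Rightarrow> bool" where
  "left_ideal T L \<longleftrightarrow> L \<subseteq> T \<and> mat_zero \<in> L
     \<and> (\<forall>A\<in>L. \<forall>B\<in>L. mat_add A B \<in> L)
     \<and> (\<forall>c. \<forall>A\<in>L. mat_smult c A \<in> L)
     \<and> (\<forall>t\<in>T. \<forall>A\<in>L. mat_mult t A \<in> L)"

definition maximal_left_ideal :: "('x::finite, 'a::field) xmat set \<Rightarrow> ('x, 'a) xmat set \<Rightarrow> bool" where
  "maximal_left_ideal T L \<longleftrightarrow> left_ideal T L \<and> L \<noteq> T
     \<and> (\<forall>L'. left_ideal T L' \<and> L \<subseteq> L' \<longrightarrow> L' = L \<or> L' = T)"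

definition jacobson_radical :: "('x::finite, 'a::field) xmat set \<Rightarrow> ('x, 'a) xmat set" where
  "jacobson_radical T = T \<inter> \<Inter>{L. maximal_left_ideal T L}"

definition semisimple_alg :: "('x::finite, 'a::field) xmat set \<Rightarrow> bool" where
  "semisimple_alg T \<longleftrightarrow> jacobson_radical T = {mat_zero}"

definition is_scheme :: "nat \<Rightarrow> (nat \<Rightarrow> ('x::finite \<times> 'x) set) \<Rightarrow> bool" where
  "is_scheme d R \<longleftrightarrow>
     (\<forall>i\<le>d. R i \<noteq> {})
   \<and> (\<forall>i\<le>d. \<forall>j\<le>d. i \<noteq> j \<longrightarrow> R i \<inter> R j = {})
   \<and> (\<Union>i\<le>d. R i) = UNIV
   \<and> R 0 = {(b, b) | b. True}
   \<and> (\<forall>c\<le>d. \<exists>c'\<le>d. R c' = {(f, e). (e, f) \<in> R c})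
   \<and> (\<forall>i\<le>d. \<forall>j\<le>d. \<forall>k\<le>d. \<forall>m n m' n'. (m, n) \<in> R k \<longrightarrow> (m', n') \<in> R k \<longrightarrow>
        card {l. (m, l) \<in> R i \<and> (l, n) \<in> R j} = card {l. (m', l) \<in> R i \<and> (l, n') \<in> R j})"

definition converse_index :: "nat \<Rightarrow> (nat \<Rightarrow> ('x \<times> 'x) set) \<Rightarrow> nat \<Rightarrow> nat" where
  "converse_index d R c = (SOME c'. c' \<le> d \<and> R c' = {(f, e). (e, f) \<in> R c})"

definition intersection_number :: "(nat \<Rightarrow> ('x::finite \<times> 'x) set) \<Rightarrow> nat \<Rightarrow> nat \<Rightarrow> nat \<Rightarrow> nat" where
  "intersection_number R i j k =
     (let (m, n) = (SOME mn. mn \<in> R k) in card {l. (m, l) \<in> R i \<and> (l, n) \<in> R j})"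

definition valency :: "nat \<Rightarrow> (nat \<Rightarrow> ('x::finite \<times> 'x) set) \<Rightarrow> nat \<Rightarrow> nat" where
  "valency d R a = intersection_number R a (converse_index d R a) 0"

definition thin_scheme :: "nat \<Rightarrow> (nat \<Rightarrow> ('x::finite \<times> 'x) set) \<Rightarrow> bool" where
  "thin_scheme d R \<longleftrightarrow> (\<forall>a\<le>d. valency d R a = 1)"

definition quasi_thin_scheme :: "nat \<Rightarrow> (nat \<Rightarrow> ('x::finite \<times> 'x) set) \<Rightarrow> bool" where
  "quasi_thin_scheme d R \<longleftrightarrow> (\<forall>a\<le>d. valency d R a \<le> 2)"

definition adj_mat :: "(nat \<Rightarrow> ('x \<times> 'x) set) \<Rightarrow> nat \<Rightarrow> ('x, 'a::field) xmat" where
  "adj_mat R a = (\<lambda>i j. if (i, j) \<in> R a then 1 else 0)"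

definition dual_idem :: "(nat \<Rightarrow> ('x \<times> 'x) set) \<Rightarrow> 'x \<Rightarrow> nat \<Rightarrow> ('x, 'a::field) xmat" where
  "dual_idem R y a = (\<lambda>i j. if i = j \<and> (y, i) \<in> R a then 1 else 0)"

definition terwilliger_alg :: "nat \<Rightarrow> (nat \<Rightarrow> ('x::finite \<times> 'x) set) \<Rightarrow> 'x \<Rightarrow> ('x, 'a::field) xmat set" where
  "terwilliger_alg d R y =
     gen_algebra ((\<lambda>a. adj_mat R a) ` {..d} \<union> (\<lambda>a. dual_idem R y a) ` {..d})"

end

theory Submission
  imports Defs
begin

text \<open>
  Relative to the base point \<open>x\<close>, a quasi-thin scheme splits \<open>X\<close> into the cells
  \<open>x R\<^sub>a\<close>, each with one or two points. Exchanging the two points of every cell of size two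
  is an automorphism of the scheme fixing \<open>x\<close>, so all matrices of the Terwilliger
  algebra \<open>T\<close> commute with it.

  If \<open>2 \<noteq> 0\<close> or all cells are singletons, every unit vector is a combination of
  indicator vectors of cells and of antisymmetric vectors \<open>e\<^sub>y - e\<^sub>y\<^sub>'\<close> on cells
  \<open>{y, y'}\<close>. Each of these generates a simple \<open>T\<close>-module, so the Jacobson radical
  annihilates it; hence the radical is zero.

  If \<open>2 = 0\<close> and \<open>{y, y'}\<close> is a cell \<open>x R\<^sub>a\<close>, then \<open>z = E\<^sub>0\<^sup>* A\<^sub>a E\<^sub>a\<^sup>*\<close> is the
  rank-one matrix \<open>e\<^sub>x (e\<^sub>y + e\<^sub>y\<^sub>')\<^sup>T\<close>, and \<open>z t z = (t\<^sub>y\<^sub>x + t\<^sub>y\<^sub>'\<^sub>x) z = 2 t\<^sub>y\<^sub>x z = 0\<close>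
  for every \<open>t \<in> T\<close>. Such a \<open>z\<close> lies in every maximal left ideal, so the radical
  is nonzero.
\<close>

lemma two_eq_zero_iff_CHAR: "(2::'a::{semiring_1_cancel, zero_neq_one}) = 0 \<longleftrightarrow> CHAR('a) = 2"
proof -
  have "(2::'a) = 0 \<longleftrightarrow> CHAR('a) dvd 2"
    using of_nat_eq_0_iff_char_dvd[of 2] by simp
  also have "\<dots> \<longleftrightarrow> CHAR('a) = 2"
  proof
    assume dvd: "CHAR('a) dvd 2"
    have "CHAR('a) \<le> 2" using dvd by (rule dvd_imp_le) simp
    moreover have "CHAR('a) \<noteq> 0" using dvd by (metis dvd_0_left_iff zero_neq_numeral)
    ultimately show "CHAR('a) = 2" using CHAR_not_1[where 'a='a] by linarith
  qed simp
  finally show ?thesis .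
qed

section \<open>Matrices\<close>

lemma if_one_zero_mult [simp]:
  "(if P then 1 else 0) * (a::'a::field) = (if P then a else 0)"
  "a * (if P then 1 else 0) = (if P then a else 0)"
  by simp_all

definition mat_vec :: "('x::finite, 'a::field) xmat \<Rightarrow> ('x \<Rightarrow> 'a) \<Rightarrow> 'x \<Rightarrow> 'a" where
  "mat_vec A v = (\<lambda>i. \<Sum>k\<in>UNIV. A i k * v k)"

definition mat_transpose :: "('x, 'a) xmat \<Rightarrow> ('x, 'a) xmat" where
  "mat_transpose A = (\<lambda>i j. A j i)"

lemma mat_mult_assoc: "mat_mult (mat_mult A B) C = mat_mult A (mat_mult B C)"
  unfolding mat_mult_def
  by (auto simp: sum_distrib_left sum_distrib_right mult.assoc fun_eq_iff intro: sum.swap)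

lemma mat_mult_one_left [simp]: "mat_mult mat_one A = A"
  and mat_mult_one_right [simp]: "mat_mult A mat_one = A"
  unfolding mat_mult_def mat_one_def by (simp_all add: fun_eq_iff)

lemma mat_mult_zero_left [simp]: "mat_mult mat_zero A = mat_zero"
  and mat_mult_zero_right [simp]: "mat_mult A mat_zero = mat_zero"
  unfolding mat_mult_def mat_zero_def by simp_all

lemma mat_add_zero_left [simp]: "mat_add mat_zero A = A"
  and mat_add_zero_right [simp]: "mat_add A mat_zero = A"
  unfolding mat_add_def mat_zero_def by simp_all

lemma mat_mult_add_left: "mat_mult (mat_add A B) C = mat_add (mat_mult A C) (mat_mult B C)"
  unfolding mat_mult_def mat_add_def by (auto simp: distrib_right sum.distrib)

lemma mat_mult_add_right: "mat_mult C (mat_add A B) = mat_add (mat_mult C A) (mat_mult C B)"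
  unfolding mat_mult_def mat_add_def by (auto simp: distrib_left sum.distrib)

lemma mat_mult_smult_left: "mat_mult (mat_smult c A) B = mat_smult c (mat_mult A B)"
  unfolding mat_mult_def mat_smult_def by (auto simp: sum_distrib_left mult.assoc)

lemma mat_mult_smult_right: "mat_mult A (mat_smult c B) = mat_smult c (mat_mult A B)"
  unfolding mat_mult_def mat_smult_def by (auto simp: sum_distrib_left algebra_simps)

lemma mat_vec_mult: "mat_vec (mat_mult A B) v = mat_vec A (mat_vec B v)"
  unfolding mat_mult_def mat_vec_def
  by (auto simp: sum_distrib_left sum_distrib_right mult.assoc fun_eq_iff intro: sum.swap)

lemma mat_vec_one [simp]: "mat_vec mat_one v = v"
  unfolding mat_vec_def mat_one_def by (simp add: fun_eq_iff)

lemma mat_vec_zero [simp]: "mat_vec mat_zero v = (\<lambda>_. 0)"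
  unfolding mat_vec_def mat_zero_def by simp

lemma mat_vec_zero_vec [simp]: "mat_vec A (\<lambda>_. 0) = (\<lambda>_. 0)"
  unfolding mat_vec_def by simp

lemma mat_vec_add: "mat_vec (mat_add A B) v = (\<lambda>i. mat_vec A v i + mat_vec B v i)"
  unfolding mat_vec_def mat_add_def by (auto simp: distrib_right sum.distrib)

lemma mat_vec_smult: "mat_vec (mat_smult c A) v = (\<lambda>i. c * mat_vec A v i)"
  unfolding mat_vec_def mat_smult_def by (auto simp: sum_distrib_left mult.assoc)

lemma mat_vec_linear:
  "mat_vec A (\<lambda>i. a * u i + b * w i) = (\<lambda>i. a * mat_vec A u i + b * mat_vec A w i)"
  unfolding mat_vec_def by (auto simp: algebra_simps sum.distrib sum_distrib_left)

lemma mat_vec_unit: "mat_vec A (\<lambda>k. if k = y then 1 else 0) = (\<lambda>i. A i y)"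
  unfolding mat_vec_def by (simp add: if_distrib cong: if_cong)

lemma mat_eq_zero_if_mat_vec_units:
  assumes "\<And>y. mat_vec A (\<lambda>k. if k = y then 1 else 0) = (\<lambda>_. 0)"
  shows "A = mat_zero"
  using assms unfolding mat_vec_unit mat_zero_def by (simp add: fun_eq_iff)

lemma mat_mult_rank_one_sandwich:
  "mat_mult (\<lambda>i j. u i * v j) (mat_mult t (\<lambda>i j. u i * v j))
     = mat_smult (\<Sum>k\<in>UNIV. v k * mat_vec t u k) (\<lambda>i j. u i * v j)"
  unfolding mat_mult_def mat_smult_def mat_vec_def
  by (simp add: fun_eq_iff sum_distrib_left sum_distrib_right mult_ac)

lemma mat_vec_dual_idem: "mat_vec (dual_idem R y c) v = (\<lambda>i. if (y, i) \<in> R c then v i else 0)"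
proof
  fix i
  show "mat_vec (dual_idem R y c) v i = (if (y, i) \<in> R c then v i else 0)"
    unfolding mat_vec_def dual_idem_def by (cases "(y, i) \<in> R c") simp_all
qed

lemma mat_vec_adj_mat: "mat_vec (adj_mat R b) v = (\<lambda>i. \<Sum>k\<in>{k. (i, k) \<in> R b}. v k)"
  unfolding mat_vec_def adj_mat_def by (simp add: fun_eq_iff sum.inter_filter[symmetric])

lemma mat_mult_dual_idem_left:
  "mat_mult (dual_idem R y c) M = (\<lambda>i j. if (y, i) \<in> R c then M i j else 0)"
proof (intro ext)
  fix i j
  show "mat_mult (dual_idem R y c) M i j = (if (y, i) \<in> R c then M i j else 0)"
    unfolding mat_mult_def dual_idem_def by (cases "(y, i) \<in> R c") simp_all
qed

lemma mat_mult_dual_idem_right: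
  "mat_mult M (dual_idem R y c) = (\<lambda>i j. if (y, j) \<in> R c then M i j else 0)"
proof (intro ext)
  fix i j
  have "mat_mult M (dual_idem R y c) i j
      = (\<Sum>k\<in>UNIV. if k = j then (if (y, j) \<in> R c then M i j else 0) else 0)"
    unfolding mat_mult_def by (intro sum.cong) (auto simp: dual_idem_def)
  then show "mat_mult M (dual_idem R y c) i j = (if (y, j) \<in> R c then M i j else 0)"
    by simp
qed

section \<open>The Jacobson radical of a matrix algebra\<close>

lemma mat_zero_in_gen_algebra: "mat_zero \<in> gen_algebra G"
proof -
  have "mat_smult 0 mat_one \<in> gen_algebra G"
    by (intro gen_algebra.smult gen_algebra.one)
  then show ?thesis
    by (simp add: mat_smult_def mat_zero_def)
qed

lemma left_ideal_eq_if_one: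
  assumes "left_ideal T L" and "mat_one \<in> L"
  shows "L = T"
  using assms unfolding left_ideal_def by (metis mat_mult_one_right subsetI subset_antisym)

definition spans_simple_module :: "('x::finite, 'a::field) xmat set \<Rightarrow> ('x \<Rightarrow> 'a) \<Rightarrow> bool" where
  "spans_simple_module T m \<longleftrightarrow> m \<noteq> (\<lambda>_. 0)
     \<and> (\<forall>t\<in>T. mat_vec t m \<noteq> (\<lambda>_. 0) \<longrightarrow> (\<exists>s\<in>T. mat_vec s (mat_vec t m) = m))"

lemma spans_simple_moduleI:
  assumes smult_closed: "\<And>c s. s \<in> T \<Longrightarrow> mat_smult c s \<in> T"
    and "m \<noteq> (\<lambda>_. 0)"
    and "\<And>t. t \<in> T \<Longrightarrow> mat_vec t m \<noteq> (\<lambda>_. 0) \<Longrightarrow>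
           \<exists>s\<in>T. \<exists>c. c \<noteq> 0 \<and> mat_vec s (mat_vec t m) = (\<lambda>i. c * m i)"
  shows "spans_simple_module T m"
  unfolding spans_simple_module_def
proof (intro conjI ballI impI assms(2))
  fix t assume "t \<in> T" "mat_vec t m \<noteq> (\<lambda>_. 0)"
  then obtain s c where s: "s \<in> T" "c \<noteq> 0" "mat_vec s (mat_vec t m) = (\<lambda>i. c * m i)"
    using assms(3) by blast
  then have "mat_vec (mat_smult (1 / c) s) (mat_vec t m) = m"
    by (simp add: mat_vec_smult)
  then show "\<exists>s\<in>T. mat_vec s (mat_vec t m) = m"
    using s(1) smult_closed by blast
qed

lemma annihilator_maximal_left_ideal:
  assumes "spans_simple_module (gen_algebra G) m"
  shows "maximal_left_ideal (gen_algebra G) {t \<in> gen_algebra G. mat_vec t m = (\<lambda>_. 0)}"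
    (is "maximal_left_ideal ?T ?L")
proof -
  have m: "m \<noteq> (\<lambda>_. 0)"
    and simple: "\<And>t. t \<in> ?T \<Longrightarrow> mat_vec t m \<noteq> (\<lambda>_. 0) \<Longrightarrow> \<exists>s\<in>?T. mat_vec s (mat_vec t m) = m"
    using assms unfolding spans_simple_module_def by auto
  have ideal: "left_ideal ?T ?L"
    unfolding left_ideal_def
  proof (intro conjI ballI allI)
    show "?L \<subseteq> ?T" and "mat_zero \<in> ?L"
      by (auto simp: mat_zero_in_gen_algebra)
  next
    fix A B assume "A \<in> ?L" "B \<in> ?L"
    then show "mat_add A B \<in> ?L" by (simp add: mat_vec_add gen_algebra.add)
  next
    fix c A assume "A \<in> ?L"
    then show "mat_smult c A \<in> ?L" by (simp add: mat_vec_smult gen_algebra.smult)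
  next
    fix s A assume "s \<in> ?T" "A \<in> ?L"
    then show "mat_mult s A \<in> ?L" by (simp add: mat_vec_mult gen_algebra.mult)
  qed
  have maximal: "L' = ?T" if L': "left_ideal ?T L'" "?L \<subseteq> L'" "L' \<noteq> ?L" for L'
  proof -
    obtain t where t: "t \<in> L'" "t \<notin> ?L" using L'(2,3) by blast
    have tT: "t \<in> ?T" using L'(1) t(1) unfolding left_ideal_def by blast
    then obtain s where s: "s \<in> ?T" "mat_vec s (mat_vec t m) = m" using simple t(2) by blast
    have st: "mat_mult s t \<in> L'" using L'(1) s(1) t(1) unfolding left_ideal_def by blast
    \<comment> \<open>\<open>1 - s t\<close> kills \<open>m\<close>, so \<open>1 = (1 - s t) + s t \<in> L'\<close>.\<close>
    define u where "u = mat_add mat_one (mat_smult (-1) (mat_mult s t))"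
    have "u \<in> ?T"
      unfolding u_def using s(1) tT by (intro gen_algebra.add gen_algebra.one gen_algebra.smult gen_algebra.mult)
    moreover have "mat_vec u m = (\<lambda>_. 0)"
      unfolding u_def by (simp add: mat_vec_add mat_vec_smult mat_vec_mult s(2))
    ultimately have "u \<in> L'" using L'(2) by blast
    then have "mat_add u (mat_mult s t) \<in> L'" using st L'(1) unfolding left_ideal_def by blast
    moreover have "mat_add u (mat_mult s t) = mat_one"
      unfolding u_def mat_add_def mat_smult_def by simp
    ultimately show ?thesis using left_ideal_eq_if_one[OF L'(1)] by simp
  qed
  have "mat_one \<in> ?T - ?L"
    using m by (simp add: gen_algebra.one)
  then have "?L \<noteq> ?T" by blast
  then show ?thesis
    unfolding maximal_left_ideal_def
  proof (intro conjI allI impI ideal)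
    fix L' assume "left_ideal ?T L' \<and> ?L \<subseteq> L'"
    then show "L' = ?L \<or> L' = ?T" using maximal by blast
  qed
qed

lemma mat_zero_in_jacobson_radical: "mat_zero \<in> jacobson_radical (gen_algebra G)"
  unfolding jacobson_radical_def maximal_left_ideal_def left_ideal_def
  using mat_zero_in_gen_algebra by blast

lemma jacobson_radical_annihilates_simple:
  assumes "spans_simple_module (gen_algebra G) m" and "j \<in> jacobson_radical (gen_algebra G)"
  shows "mat_vec j m = (\<lambda>_. 0)"
  using assms annihilator_maximal_left_ideal unfolding jacobson_radical_def by blast

lemma left_ideal_add_left_multiples:
  assumes L: "left_ideal (gen_algebra G) L" and z: "z \<in> gen_algebra G"
  shows "left_ideal (gen_algebra G) {mat_add l (mat_mult t z) | l t. l \<in> L \<and> t \<in> gen_algebra G}"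
    (is "left_ideal ?T ?L'")
proof -
  have L_closed: "L \<subseteq> ?T" "mat_zero \<in> L" "\<And>A B. A \<in> L \<Longrightarrow> B \<in> L \<Longrightarrow> mat_add A B \<in> L"
    "\<And>c A. A \<in> L \<Longrightarrow> mat_smult c A \<in> L" "\<And>s A. s \<in> ?T \<Longrightarrow> A \<in> L \<Longrightarrow> mat_mult s A \<in> L"
    using L unfolding left_ideal_def by auto
  have mem: "mat_add l (mat_mult t z) \<in> ?L'" if "l \<in> L" "t \<in> ?T" for l t
    using that by blast
  have add: "mat_add (mat_add l1 (mat_mult t1 z)) (mat_add l2 (mat_mult t2 z))
      = mat_add (mat_add l1 l2) (mat_mult (mat_add t1 t2) z)" for l1 t1 l2 t2
    unfolding mat_mult_add_left by (simp add: mat_add_def fun_eq_iff algebra_simps)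
  have smult: "mat_smult c (mat_add l (mat_mult t z))
      = mat_add (mat_smult c l) (mat_mult (mat_smult c t) z)" for c l t
    unfolding mat_mult_smult_left by (simp add: mat_add_def mat_smult_def fun_eq_iff distrib_left)
  have mult: "mat_mult s (mat_add l (mat_mult t z))
      = mat_add (mat_mult s l) (mat_mult (mat_mult s t) z)" for s l t
    by (simp add: mat_mult_add_right mat_mult_assoc)
  show ?thesis
    unfolding left_ideal_def
  proof (intro conjI ballI allI)
    show "?L' \<subseteq> ?T"
      using L_closed(1) z by (auto intro!: gen_algebra.add gen_algebra.mult)
    show "mat_zero \<in> ?L'"
      using mem[OF L_closed(2) mat_zero_in_gen_algebra] by simp
  next
    fix A B assume "A \<in> ?L'" "B \<in> ?L'"
    then obtain l1 t1 l2 t2 where A: "A = mat_add l1 (mat_mult t1 z)" "l1 \<in> L" "t1 \<in> ?T"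
      and B: "B = mat_add l2 (mat_mult t2 z)" "l2 \<in> L" "t2 \<in> ?T"
      by blast
    show "mat_add A B \<in> ?L'"
      unfolding A(1) B(1) add using A B by (intro mem L_closed(3) gen_algebra.add)
  next
    fix c A assume "A \<in> ?L'"
    then obtain l t where A: "A = mat_add l (mat_mult t z)" "l \<in> L" "t \<in> ?T"
      by blast
    show "mat_smult c A \<in> ?L'"
      unfolding A(1) smult using A by (intro mem L_closed(4) gen_algebra.smult)
  next
    fix s A assume "s \<in> ?T" "A \<in> ?L'"
    then obtain l t where A: "A = mat_add l (mat_mult t z)" "l \<in> L" "t \<in> ?T"
      by blast
    show "mat_mult s A \<in> ?L'"
      unfolding A(1) mult using A \<open>s \<in> ?T\<close> by (intro mem L_closed(5) gen_algebra.mult)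
  qed
qed

lemma one_in_left_ideal_if_square_zero_complement:
  assumes L: "left_ideal (gen_algebra G) L" and l: "l \<in> L"
    and n: "n \<in> gen_algebra G" "mat_mult n n = mat_zero" and one: "mat_add l n = mat_one"
  shows "mat_one \<in> L"
proof -
  \<comment> \<open>\<open>l = 1 - n\<close> has the left inverse \<open>1 + n\<close>\<close>
  have "l = mat_add mat_one (mat_smult (-1) n)"
    using one by (simp add: mat_add_def mat_smult_def fun_eq_iff algebra_simps)
  then have "mat_mult (mat_add mat_one n) l = mat_one"
    using n(2) by (simp add: mat_mult_add_left mat_mult_add_right mat_mult_smult_right)
      (simp add: mat_add_def mat_smult_def mat_zero_def fun_eq_iff)
  moreover have "mat_add mat_one n \<in> gen_algebra G"
    using n(1) by (intro gen_algebra.add gen_algebra.one)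
  ultimately show ?thesis
    using L l unfolding left_ideal_def by metis
qed

lemma jacobson_radical_if_sandwich_zero:
  assumes z: "z \<in> gen_algebra G"
    and sandwich: "\<And>t. t \<in> gen_algebra G \<Longrightarrow> mat_mult z (mat_mult t z) = mat_zero"
  shows "z \<in> jacobson_radical (gen_algebra G)"
  unfolding jacobson_radical_def
proof (intro IntI z InterI, clarify)
  fix L assume "maximal_left_ideal (gen_algebra G) L"
  then have L: "left_ideal (gen_algebra G) L" "L \<noteq> gen_algebra G"
    and maximal: "\<And>L'. left_ideal (gen_algebra G) L' \<Longrightarrow> L \<subseteq> L' \<Longrightarrow> L' = L \<or> L' = gen_algebra G"
    unfolding maximal_left_ideal_def by auto
  define L' where "L' = {mat_add l (mat_mult t z) | l t. l \<in> L \<and> t \<in> gen_algebra G}"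
  have L': "left_ideal (gen_algebra G) L'"
    unfolding L'_def using left_ideal_add_left_multiples[OF L(1) z] .
  show "z \<in> L"
  proof (rule ccontr)
    assume "z \<notin> L"
    have "mat_add l (mat_mult mat_zero z) \<in> L'" if "l \<in> L" for l
      unfolding L'_def using that mat_zero_in_gen_algebra by blast
    then have "L \<subseteq> L'" by auto
    moreover have "mat_add mat_zero (mat_mult mat_one z) \<in> L'"
      unfolding L'_def using L(1) gen_algebra.one unfolding left_ideal_def by blast
    then have "z \<in> L'" by simp
    ultimately have "L' = gen_algebra G" using maximal[OF L'] \<open>z \<notin> L\<close> by blast
    then obtain l t where lt: "mat_one = mat_add l (mat_mult t z)" "l \<in> L" "t \<in> gen_algebra G"
      using gen_algebra.one unfolding L'_def by blast
    have "mat_mult (mat_mult t z) (mat_mult t z) = mat_zero"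
      using sandwich lt(3) by (simp add: mat_mult_assoc)
    then have "mat_one \<in> L"
      by (rule one_in_left_ideal_if_square_zero_complement
          [OF L(1) lt(2) gen_algebra.mult[OF lt(3) z] _ lt(1)[symmetric]])
    then show False
      using L left_ideal_eq_if_one by blast
  qed
qed

section \<open>Association schemes\<close>

locale association_scheme =
  fixes d :: nat and R :: "nat \<Rightarrow> ('x::finite \<times> 'x) set"
  assumes scheme: "is_scheme d R"
begin

lemma scheme_axioms:
  "\<forall>i\<le>d. R i \<noteq> {}"
  "\<forall>i\<le>d. \<forall>j\<le>d. i \<noteq> j \<longrightarrow> R i \<inter> R j = {}"
  "(\<Union>i\<le>d. R i) = UNIV"
  "R 0 = {(b, b) | b. True}"
  "\<forall>c\<le>d. \<exists>c'\<le>d. R c' = {(f, e). (e, f) \<in> R c}"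
  "\<forall>i\<le>d. \<forall>j\<le>d. \<forall>k\<le>d. \<forall>m n m' n'. (m, n) \<in> R k \<longrightarrow> (m', n') \<in> R k \<longrightarrow>
        card {l. (m, l) \<in> R i \<and> (l, n) \<in> R j} = card {l. (m', l) \<in> R i \<and> (l, n') \<in> R j}"
  by (insert scheme[unfolded is_scheme_def], elim conjE, assumption)+

lemma rel_nonempty: "i \<le> d \<Longrightarrow> R i \<noteq> {}"
  using scheme_axioms(1) by blast

lemma rel_unique: "i \<le> d \<Longrightarrow> j \<le> d \<Longrightarrow> p \<in> R i \<Longrightarrow> p \<in> R j \<Longrightarrow> i = j"
  using scheme_axioms(2) by blast

lemma rel_cover: "\<exists>i\<le>d. p \<in> R i"
  using scheme_axioms(3) by blast

lemma rel_zero_iff [simp]: "(a, b) \<in> R 0 \<longleftrightarrow> a = b"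
  using scheme_axioms(4) by auto

lemma intersection_card_eq:
  assumes "i \<le> d" "j \<le> d" "k \<le> d" "(m, n) \<in> R k" "(m', n') \<in> R k"
  shows "card {l. (m, l) \<in> R i \<and> (l, n) \<in> R j} = card {l. (m', l) \<in> R i \<and> (l, n') \<in> R j}"
  using scheme_axioms(6) assms by blast

lemma converse_index:
  assumes "c \<le> d"
  shows "converse_index d R c \<le> d" and "(a, b) \<in> R (converse_index d R c) \<longleftrightarrow> (b, a) \<in> R c"
proof -
  have "\<exists>c'\<le>d. R c' = {(f, e). (e, f) \<in> R c}"
    using scheme_axioms(5) assms by blast
  then have "converse_index d R c \<le> d \<and> R (converse_index d R c) = {(f, e). (e, f) \<in> R c}"
    unfolding converse_index_def by (rule someI_ex)
  then show "converse_index d R c \<le> d" and "(a, b) \<in> R (converse_index d R c) \<longleftrightarrow> (b, a) \<in> R c"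
    by auto
qed

lemma card_rel_image:
  assumes a: "a \<le> d"
  shows "card {l. (y, l) \<in> R a} = valency d R a"
proof -
  let ?a' = "converse_index d R a"
  obtain m where m: "(SOME mn. mn \<in> R 0) = (m, m)"
    using someI_ex[of "\<lambda>mn. mn \<in> R 0"] by (metis rel_zero_iff surj_pair)
  have "valency d R a = card {l. (m, l) \<in> R a \<and> (l, m) \<in> R ?a'}"
    unfolding valency_def intersection_number_def m by simp
  also have "\<dots> = card {l. (y, l) \<in> R a \<and> (l, y) \<in> R ?a'}"
    using a converse_index(1)[OF a] by (intro intersection_card_eq[of a _ 0 m m y y]) simp_all
  also have "{l. (y, l) \<in> R a \<and> (l, y) \<in> R ?a'} = {l. (y, l) \<in> R a}"
    using converse_index(2)[OF a] by auto
  finally show ?thesis by simp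
qed

lemma rel_image_nonempty:
  assumes a: "a \<le> d"
  shows "\<exists>z. (y, z) \<in> R a"
proof -
  obtain p q where "(p, q) \<in> R a" using rel_nonempty[OF a] by auto
  then have "card {l. (p, l) \<in> R a} \<noteq> 0" by (auto simp: card_eq_0_iff)
  then have "card {l. (y, l) \<in> R a} \<noteq> 0" using card_rel_image[OF a] by simp
  then show ?thesis by (metis Collect_empty_eq card.empty)
qed

end

locale quasi_thin_at = association_scheme d R
  for d :: nat and R :: "nat \<Rightarrow> ('x::finite \<times> 'x) set" +
  fixes x :: 'x
  assumes quasi_thin: "quasi_thin_scheme d R"
begin

definition rel_of :: "'x \<Rightarrow> nat" where
  "rel_of z = (SOME b. b \<le> d \<and> (x, z) \<in> R b)"

lemma rel_of: "rel_of z \<le> d" "(x, z) \<in> R (rel_of z)"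
  using someI_ex[OF rel_cover[of "(x, z)"]] unfolding rel_of_def by auto

lemma rel_of_eqI: "b \<le> d \<Longrightarrow> (x, z) \<in> R b \<Longrightarrow> rel_of z = b"
  using rel_unique rel_of by blast

lemma rel_of_base [simp]: "rel_of x = 0"
  by (rule rel_of_eqI) simp_all

definition cell :: "'x \<Rightarrow> 'x set" where
  "cell z = {w. (x, w) \<in> R (rel_of z)}"

lemma in_cell_iff: "w \<in> cell z \<longleftrightarrow> rel_of w = rel_of z"
proof
  show "w \<in> cell z \<Longrightarrow> rel_of w = rel_of z"
    unfolding cell_def by (rule rel_of_eqI[OF rel_of(1)]) simp
  show "rel_of w = rel_of z \<Longrightarrow> w \<in> cell z"
    unfolding cell_def using rel_of(2)[of w] by simp
qed

lemma in_cell_self [simp]: "z \<in> cell z"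
  by (simp add: in_cell_iff)

lemma cell_base: "cell x = {x}"
  unfolding cell_def by auto

lemma card_cell: "card (cell z) = valency d R (rel_of z)"
  unfolding cell_def using card_rel_image[OF rel_of(1)] .

lemma card_cell_le_2: "card (cell z) \<le> 2"
  using quasi_thin rel_of(1) unfolding card_cell quasi_thin_scheme_def by blast

definition swap :: "'x \<Rightarrow> 'x" where
  "swap z = (if \<exists>w\<in>cell z. w \<noteq> z then SOME w. w \<in> cell z \<and> w \<noteq> z else z)"

lemma swap_in_cell: "swap z \<in> cell z"
  unfolding swap_def using someI_ex[of "\<lambda>w. w \<in> cell z \<and> w \<noteq> z"] by auto

lemma swap_neq: "w \<in> cell z \<Longrightarrow> w \<noteq> z \<Longrightarrow> swap z \<noteq> z"
  unfolding swap_def using someI_ex[of "\<lambda>w. w \<in> cell z \<and> w \<noteq> z"] by auto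

lemma rel_of_swap [simp]: "rel_of (swap z) = rel_of z"
  using swap_in_cell in_cell_iff by blast

lemma cell_swap [simp]: "cell (swap z) = cell z"
  unfolding cell_def by simp

lemma cell_eq: "cell z = {z, swap z}"
proof (cases "swap z = z")
  case True
  have "w = z" if "w \<in> cell z" for w
    using swap_neq[OF that] True by blast
  then show ?thesis
    using True in_cell_self by auto
next
  case False
  have sub: "{z, swap z} \<subseteq> cell z" using swap_in_cell by simp
  then have "card {z, swap z} \<le> card (cell z)" by (simp add: card_mono)
  moreover have "card {z, swap z} = 2" using False by simp
  ultimately have "card {z, swap z} = card (cell z)" using card_cell_le_2[of z] by linarith
  then show ?thesis
    using card_subset_eq[OF finite sub] by simp
qed

lemma swap_swap [simp]: "swap (swap z) = z"
proof (rule ccontr)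
  assume neq: "swap (swap z) \<noteq> z"
  have "swap (swap z) \<in> {z, swap z}"
    using swap_in_cell[of "swap z"] cell_eq[of z] by simp
  then have "swap (swap z) = swap z" using neq by blast
  then have "cell z = {swap z}" using cell_eq[of "swap z"] by simp
  then show False using neq in_cell_self[of z] by simp
qed

lemma swap_eq_iff [simp]: "swap a = swap b \<longleftrightarrow> a = b"
  by (metis swap_swap)

lemma swap_base [simp]: "swap x = x"
  using swap_in_cell[of x] cell_base by simp

lemma card_cell_filter:
  "card {l \<in> cell z. P l} = (if swap z = z then of_bool (P z) else of_bool (P z) + of_bool (P (swap z)))"
proof -
  have "{l \<in> cell z. P l} = (if P z then {z} else {}) \<union> (if P (swap z) then {swap z} else {})"
    unfolding cell_eq by auto
  then show ?thesis
    by (cases "swap z = z") (simp_all add: card_insert_if)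
qed

lemma sum_cell: "(\<Sum>k\<in>cell z. g k) = (if swap z = z then g z else g z + g (swap z))"
  unfolding cell_eq by auto

lemma card_cell_rel_eq:
  assumes "b \<le> d" and "rel_of y = rel_of y'"
  shows "card {l \<in> cell z. (l, y) \<in> R b} = card {l \<in> cell z. (l, y') \<in> R b}"
proof -
  have "card {l. (x, l) \<in> R (rel_of z) \<and> (l, y) \<in> R b} = card {l. (x, l) \<in> R (rel_of z) \<and> (l, y') \<in> R b}"
    using assms rel_of[of y] rel_of[of y'] rel_of(1)[of z]
    by (intro intersection_card_eq[of "rel_of z" b "rel_of y" x y x y']) simp_all
  then show ?thesis
    unfolding cell_def by simp
qed

text \<open>The \<open>R b\<close>-edges between two cells form a biregular bipartite graph, its degrees
  being intersection numbers. Between cells of size at most two this forces the edge set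
  to be invariant under the swap.\<close>

lemma swap_preserves_rel:
  assumes b: "b \<le> d" and zy: "(z, y) \<in> R b"
  shows "(swap z, swap y) \<in> R b"
proof -
  let ?b' = "converse_index d R b"
  have col: "card {l \<in> cell z. (l, y) \<in> R b} = card {l \<in> cell z. (l, swap y) \<in> R b}"
    using card_cell_rel_eq[OF b, of y "swap y"] by simp
  have "card {l \<in> cell y. (l, z) \<in> R ?b'} = card {l \<in> cell y. (l, swap z) \<in> R ?b'}"
    using card_cell_rel_eq[OF converse_index(1)[OF b], of z "swap z"] by simp
  then have row: "card {l \<in> cell y. (z, l) \<in> R b} = card {l \<in> cell y. (swap z, l) \<in> R b}"
    unfolding converse_index(2)[OF b] .
  show ?thesis
    using col row zy unfolding card_cell_filter
    by (cases "swap z = z"; cases "swap y = y") (simp_all add: of_bool_def split: if_splits)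
qed

lemma swap_rel_iff [simp]: "b \<le> d \<Longrightarrow> (swap z, swap y) \<in> R b \<longleftrightarrow> (z, y) \<in> R b"
  using swap_preserves_rel[of b z y] swap_preserves_rel[of b "swap z" "swap y"] by auto

lemma base_rel_swap_iff [simp]: "c \<le> d \<Longrightarrow> (x, swap z) \<in> R c \<longleftrightarrow> (x, z) \<in> R c"
  using swap_rel_iff[of c x z] by simp

lemma thin_iff_swap_id: "thin_scheme d R \<longleftrightarrow> (\<forall>z. swap z = z)"
proof
  assume "thin_scheme d R"
  then have "card (cell z) = 1" for z
    using rel_of(1) unfolding card_cell thin_scheme_def by blast
  then show "\<forall>z. swap z = z"
    using cell_eq by (metis card_1_singletonE doubleton_eq_iff insert_absorb2)
next
  assume id: "\<forall>z. swap z = z"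
  show "thin_scheme d R"
    unfolding thin_scheme_def
  proof (intro allI impI)
    fix a assume a: "a \<le> d"
    then obtain z where "(x, z) \<in> R a"
      using rel_image_nonempty by blast
    then have "rel_of z = a" by (rule rel_of_eqI[OF a])
    then show "valency d R a = 1"
      using card_cell[of z] cell_eq[of z] id by simp
  qed
qed

end

section \<open>The Terwilliger algebra of a quasi-thin scheme\<close>

context quasi_thin_at
begin

abbreviation T :: "('x, 'a::field) xmat set" where
  "T \<equiv> terwilliger_alg d R x"

lemma adj_mat_in_T: "b \<le> d \<Longrightarrow> adj_mat R b \<in> T"
  unfolding terwilliger_alg_def by (rule gen_algebra.gen) auto

lemma dual_idem_in_T: "c \<le> d \<Longrightarrow> dual_idem R x c \<in> T"
  unfolding terwilliger_alg_def by (rule gen_algebra.gen) auto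

lemma mat_mult_in_T: "A \<in> T \<Longrightarrow> B \<in> T \<Longrightarrow> mat_mult A B \<in> T"
  unfolding terwilliger_alg_def by (rule gen_algebra.mult)

lemma mat_smult_in_T: "A \<in> T \<Longrightarrow> mat_smult c A \<in> T"
  unfolding terwilliger_alg_def by (rule gen_algebra.smult)

lemma sum_swap_reindex: "(\<Sum>k\<in>UNIV. g (swap k)) = (\<Sum>k\<in>UNIV. g k)"
  by (rule sum.reindex_bij_witness[where i = swap and j = swap]) auto

lemma T_swap_invariant:
  assumes "t \<in> T"
  shows "t (swap z) (swap y) = t z y"
  using assms unfolding terwilliger_alg_def
proof (induction arbitrary: z y rule: gen_algebra.induct)
  case (gen A)
  then show ?case
    by (auto simp: adj_mat_def dual_idem_def)
next
  case (mult A B)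
  have "(\<Sum>k\<in>UNIV. A (swap z) k * B k (swap y)) = (\<Sum>k\<in>UNIV. A (swap z) (swap k) * B (swap k) (swap y))"
    by (rule sum_swap_reindex[symmetric])
  then show ?case
    unfolding mat_mult_def using mult.IH by simp
qed (simp_all add: mat_one_def mat_add_def mat_smult_def)

lemma mat_transpose_in_T:
  assumes "t \<in> T"
  shows "mat_transpose t \<in> T"
  using assms unfolding terwilliger_alg_def
proof (induction rule: gen_algebra.induct)
  case (gen A)
  then consider b where "b \<le> d" "A = adj_mat R b" | c where "A = dual_idem R x c" "c \<le> d"
    by auto
  then show ?case
  proof cases
    case (1 b)
    then have "mat_transpose A = adj_mat R (converse_index d R b)"
      using converse_index(2) by (simp add: mat_transpose_def adj_mat_def)
    then show ?thesis
      using converse_index(1)[OF 1(1)] by (auto intro: gen_algebra.gen)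
  next
    case 2
    then have "mat_transpose A = A"
      by (auto simp: mat_transpose_def dual_idem_def fun_eq_iff)
    then show ?thesis
      using gen by (auto intro: gen_algebra.gen)
  qed
next
  case one
  have "mat_transpose mat_one = (mat_one :: ('x, 'a) xmat)"
    by (auto simp: mat_transpose_def mat_one_def fun_eq_iff)
  then show ?case by (simp add: gen_algebra.one)
next
  case (add A B)
  then show ?case
    using gen_algebra.add[OF add.IH] by (simp add: mat_transpose_def mat_add_def)
next
  case (smult A c)
  then show ?case
    using gen_algebra.smult[OF smult.IH] by (simp add: mat_transpose_def mat_smult_def)
next
  case (mult A B)
  have "mat_transpose (mat_mult A B) = mat_mult (mat_transpose B) (mat_transpose A)"
    by (simp add: mat_transpose_def mat_mult_def mult.commute)
  then show ?case
    using gen_algebra.mult[OF mult.IH(2,1)] by simp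
qed

lemma mat_vec_T_swap_eigenvector:
  assumes "t \<in> T" and "\<And>k. m (swap k) = e * m k"
  shows "mat_vec t m (swap z) = e * mat_vec t m z"
proof -
  have "mat_vec t m (swap z) = (\<Sum>k\<in>UNIV. t (swap z) (swap k) * m (swap k))"
    unfolding mat_vec_def by (rule sum_swap_reindex[symmetric])
  also have "\<dots> = e * mat_vec t m z"
    using assms by (simp add: T_swap_invariant mat_vec_def sum_distrib_left algebra_simps)
  finally show ?thesis .
qed

lemma mat_vec_gather_at_base:
  "mat_vec (mat_mult (dual_idem R x 0) (mat_mult (adj_mat R c) (dual_idem R x c))) w
     = (\<lambda>i. if i = x then \<Sum>k\<in>{k. (x, k) \<in> R c}. w k else 0)"
  by (simp add: mat_vec_mult mat_vec_dual_idem mat_vec_adj_mat fun_eq_iff)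

lemma mat_vec_spread_from_base:
  assumes "a \<le> d"
  shows "mat_vec (adj_mat R (converse_index d R a)) (\<lambda>i. if i = x then \<mu> else 0)
           = (\<lambda>i. if (x, i) \<in> R a then \<mu> else 0)"
  using converse_index(2)[OF assms] by (simp add: mat_vec_adj_mat fun_eq_iff)

lemma mat_vec_cell_transfer:
  "mat_vec (mat_mult (adj_mat R (converse_index d R (rel_of y)))
      (mat_mult (dual_idem R x 0) (mat_mult (adj_mat R (rel_of z)) (dual_idem R x (rel_of z))))) w
     = (\<lambda>i. (\<Sum>k\<in>cell z. w k) * (if i \<in> cell y then 1 else 0))"
proof -
  have "mat_vec (mat_mult (adj_mat R (converse_index d R (rel_of y)))
      (mat_mult (dual_idem R x 0) (mat_mult (adj_mat R (rel_of z)) (dual_idem R x (rel_of z))))) w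
      = mat_vec (adj_mat R (converse_index d R (rel_of y))) (\<lambda>i. if i = x then \<Sum>k\<in>cell z. w k else 0)"
    unfolding mat_vec_mult[of "adj_mat R _"] mat_vec_gather_at_base cell_def ..
  also have "\<dots> = (\<lambda>i. if (x, i) \<in> R (rel_of y) then \<Sum>k\<in>cell z. w k else 0)"
    by (rule mat_vec_spread_from_base[OF rel_of(1)])
  finally show ?thesis
    by (simp add: cell_def fun_eq_iff)
qed

lemma cell_indicator_spans_simple:
  assumes two: "(2::'a::field) \<noteq> 0 \<or> (\<forall>z. swap z = z)"
  shows "spans_simple_module (T :: ('x, 'a) xmat set) (\<lambda>i. if i \<in> cell y then 1 else 0)"
    (is "spans_simple_module _ ?m")
proof (rule spans_simple_moduleI[OF mat_smult_in_T])
  show "?m \<noteq> (\<lambda>_. 0)"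
    by (metis in_cell_self one_neq_zero)
next
  fix t :: "('x, 'a) xmat" assume t: "t \<in> T" and nz: "mat_vec t ?m \<noteq> (\<lambda>_. 0)"
  define w where "w = mat_vec t ?m"
  obtain z where wz: "w z \<noteq> 0" using nz unfolding w_def by auto
  have w_swap: "w (swap k) = w k" for k
    using mat_vec_T_swap_eigenvector[OF t, of ?m 1] unfolding w_def by (simp add: in_cell_iff)
  have "(\<Sum>k\<in>cell z. w k) \<noteq> 0"
  proof (cases "swap z = z")
    case True
    then show ?thesis using wz by (simp add: sum_cell)
  next
    case False
    then have "(2::'a) \<noteq> 0" using two by blast
    then show ?thesis using False wz by (simp add: sum_cell w_swap flip: mult_2)
  qed
  moreover have "mat_mult (adj_mat R (converse_index d R (rel_of y)))
      (mat_mult (dual_idem R x 0) (mat_mult (adj_mat R (rel_of z)) (dual_idem R x (rel_of z)))) \<in> T"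
    using rel_of(1) converse_index(1) by (intro mat_mult_in_T adj_mat_in_T dual_idem_in_T) auto
  ultimately show "\<exists>s\<in>T. \<exists>c. c \<noteq> 0 \<and> mat_vec s (mat_vec t ?m) = (\<lambda>i. c * ?m i)"
    using mat_vec_cell_transfer unfolding w_def by blast
qed

lemma mat_vec_T_swap_difference:
  assumes t: "t \<in> T" and y: "swap y \<noteq> y"
  shows "mat_vec t (\<lambda>k. if k = y then 1 else if k = swap y then -1 else 0) = (\<lambda>i. t i y - t (swap i) y)"
proof -
  have "(\<lambda>k. if k = y then 1 else if k = swap y then -1 else 0)
      = (\<lambda>k. 1 * (if k = y then 1 else 0) + (-1) * (if k = swap y then 1 else (0::'a)))"
    using y by (auto simp: fun_eq_iff)
  then have "mat_vec t (\<lambda>k. if k = y then 1 else if k = swap y then -1 else 0)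
      = (\<lambda>i. 1 * t i y + (-1) * t i (swap y))"
    by (simp only: mat_vec_linear mat_vec_unit)
  moreover have "t i (swap y) = t (swap i) y" for i
    using T_swap_invariant[OF t, of "swap i" y] by (simp only: swap_swap)
  ultimately show ?thesis by simp
qed

lemma mat_vec_transpose_sandwich:
  "mat_vec (mat_mult (dual_idem R x a) (mat_mult (mat_transpose t) (dual_idem R x c))) w
     = (\<lambda>i. if (x, i) \<in> R a then \<Sum>k\<in>{k. (x, k) \<in> R c}. t k i * w k else 0)"
proof
  fix i
  have "(\<Sum>k\<in>UNIV. t k i * (if (x, k) \<in> R c then w k else 0)) = (\<Sum>k\<in>{k. (x, k) \<in> R c}. t k i * w k)"
    by (simp add: sum.inter_filter[symmetric] if_distrib cong: if_cong)
  then show "mat_vec (mat_mult (dual_idem R x a) (mat_mult (mat_transpose t) (dual_idem R x c))) w i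
      = (if (x, i) \<in> R a then \<Sum>k\<in>{k. (x, k) \<in> R c}. t k i * w k else 0)"
    unfolding mat_vec_mult mat_vec_dual_idem by (simp add: mat_vec_def mat_transpose_def)
qed

lemma mat_vec_transpose_sandwich_swap_difference:
  assumes t: "t \<in> T" and y: "swap y \<noteq> y" and z: "swap z \<noteq> z"
    and w: "w = (\<lambda>i. t i y - t (swap i) y)"
  shows "mat_vec (mat_mult (dual_idem R x (rel_of y)) (mat_mult (mat_transpose t) (dual_idem R x (rel_of z)))) w
     = (\<lambda>i. (w z * w z) * (if i = y then 1 else if i = swap y then -1 else 0))"
proof
  fix i
  have w_swap: "w (swap k) = - w k" for k
    using w by simp
  have w_z: "w z = t z y - t (swap z) y"
    using w by simp
  have t_swap: "t (swap z) q = t z (swap q)" for q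
    using T_swap_invariant[OF t, of z "swap q"] by (simp only: swap_swap)
  have "mat_vec (mat_mult (dual_idem R x (rel_of y)) (mat_mult (mat_transpose t) (dual_idem R x (rel_of z)))) w i
      = (if i \<in> cell y then \<Sum>k\<in>cell z. t k i * w k else 0)"
    unfolding mat_vec_transpose_sandwich by (simp add: cell_def)
  also have "\<dots> = (if i \<in> cell y then w z * (t z i - t (swap z) i) else 0)"
    using z w_swap by (simp add: sum_cell algebra_simps)
  also have "\<dots> = (w z * w z) * (if i = y then 1 else if i = swap y then -1 else 0)"
    using y w_z t_swap[of y] T_swap_invariant[OF t, of z y] by (auto simp: cell_eq)
  finally show "mat_vec (mat_mult (dual_idem R x (rel_of y)) (mat_mult (mat_transpose t) (dual_idem R x (rel_of z)))) w i
      = (w z * w z) * (if i = y then 1 else if i = swap y then -1 else 0)" .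
qed

lemma swap_difference_spans_simple:
  assumes y: "swap y \<noteq> y"
  shows "spans_simple_module (T :: ('x, 'a::field) xmat set)
           (\<lambda>i. if i = y then 1 else if i = swap y then -1 else 0)"
    (is "spans_simple_module _ ?m")
proof (rule spans_simple_moduleI[OF mat_smult_in_T])
  show "?m \<noteq> (\<lambda>_. 0)"
    by (metis one_neq_zero)
next
  fix t :: "('x, 'a) xmat" assume t: "t \<in> T" and nz: "mat_vec t ?m \<noteq> (\<lambda>_. 0)"
  define w where "w = mat_vec t ?m"
  have w: "w = (\<lambda>i. t i y - t (swap i) y)"
    unfolding w_def using t y by (rule mat_vec_T_swap_difference)
  obtain z where wz: "w z \<noteq> 0" using nz unfolding w_def by auto
  then have z: "swap z \<noteq> z" using w by auto
  have "mat_vec (mat_mult (dual_idem R x (rel_of y)) (mat_mult (mat_transpose t) (dual_idem R x (rel_of z)))) w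
      = (\<lambda>i. (w z * w z) * ?m i)"
    using t y z w by (rule mat_vec_transpose_sandwich_swap_difference)
  moreover have "mat_mult (dual_idem R x (rel_of y)) (mat_mult (mat_transpose t) (dual_idem R x (rel_of z))) \<in> T"
    using rel_of(1) by (intro mat_mult_in_T dual_idem_in_T mat_transpose_in_T t)
  moreover have "w z * w z \<noteq> 0" using wz by simp
  ultimately show "\<exists>s\<in>T. \<exists>c. c \<noteq> 0 \<and> mat_vec s (mat_vec t ?m) = (\<lambda>i. c * ?m i)"
    unfolding w_def by blast
qed

lemma jacobson_radical_T_eq_zero:
  assumes two: "(2::'a::field) \<noteq> 0 \<or> (\<forall>z. swap z = z)"
  shows "jacobson_radical (T :: ('x, 'a) xmat set) = {mat_zero}"
proof
  show "{mat_zero} \<subseteq> jacobson_radical (T :: ('x, 'a) xmat set)"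
    unfolding terwilliger_alg_def using mat_zero_in_jacobson_radical by blast
next
  show "jacobson_radical (T :: ('x, 'a) xmat set) \<subseteq> {mat_zero}"
  proof
    fix j :: "('x, 'a) xmat" assume j: "j \<in> jacobson_radical T"
    have kills: "mat_vec j m = (\<lambda>_. 0)" if "spans_simple_module (T :: ('x, 'a) xmat set) m" for m
      using jacobson_radical_annihilates_simple that j unfolding terwilliger_alg_def by blast
    let ?cell = "\<lambda>y k. if k \<in> cell y then 1 else 0 :: 'a"
    let ?diff = "\<lambda>y k. if k = y then 1 else if k = swap y then -1 else 0 :: 'a"
    have "mat_vec j (\<lambda>k. if k = y then 1 else 0) = (\<lambda>_. 0)" for y
    proof (cases "swap y = y")
      case True
      then have "(\<lambda>k. if k = y then 1 else 0) = ?cell y"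
        by (auto simp: cell_eq fun_eq_iff)
      then show ?thesis
        using kills[OF cell_indicator_spans_simple[OF two]] by simp
    next
      case False
      then have "(2::'a) \<noteq> 0" using two by blast
      then have "(\<lambda>k. if k = y then 1 else 0) = (\<lambda>k. (1/2) * ?cell y k + (1/2) * ?diff y k)"
        using False by (auto simp: cell_eq fun_eq_iff field_simps)
      then have "mat_vec j (\<lambda>k. if k = y then 1 else 0)
          = (\<lambda>i. (1/2) * mat_vec j (?cell y) i + (1/2) * mat_vec j (?diff y) i)"
        by (simp only: mat_vec_linear)
      also have "\<dots> = (\<lambda>_. 0)"
        using kills[OF cell_indicator_spans_simple[OF two]]
          kills[OF swap_difference_spans_simple[OF False]]
        by simp
      finally show ?thesis .
    qed
    then show "j \<in> {mat_zero}"
      using mat_eq_zero_if_mat_vec_units by blast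
  qed
qed

lemma jacobson_radical_T_neq_zero:
  assumes two: "(2::'a::field) = 0" and y: "swap y \<noteq> y"
  shows "jacobson_radical (T :: ('x, 'a) xmat set) \<noteq> {mat_zero}"
proof -
  let ?u = "\<lambda>i. if i = x then 1 else 0 :: 'a" and ?v = "\<lambda>j. if j \<in> cell y then 1 else 0 :: 'a"
  define z :: "('x, 'a) xmat"
    where "z = mat_mult (dual_idem R x 0) (mat_mult (adj_mat R (rel_of y)) (dual_idem R x (rel_of y)))"
  have "z \<in> T"
    unfolding z_def using rel_of(1) by (intro mat_mult_in_T dual_idem_in_T adj_mat_in_T) auto
  have z_eq: "z = (\<lambda>i j. ?u i * ?v j)"
    unfolding z_def mat_mult_dual_idem_left mat_mult_dual_idem_right
    by (auto simp: adj_mat_def cell_def fun_eq_iff)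
  have sandwich: "mat_mult z (mat_mult t z) = mat_zero" if t: "t \<in> T" for t
  proof -
    have "(\<Sum>k\<in>UNIV. ?v k * mat_vec t ?u k) = (\<Sum>k\<in>cell y. t k x)"
      by (simp add: mat_vec_unit sum.If_cases)
    also have "\<dots> = t y x + t (swap y) x"
      using y by (simp add: sum_cell)
    also have "\<dots> = 2 * t y x"
      using T_swap_invariant[OF t, of y x] by (simp only: swap_base mult_2)
    also have "\<dots> = 0"
      using two by simp
    finally have scalar: "(\<Sum>k\<in>UNIV. ?v k * mat_vec t ?u k) = 0" .
    show ?thesis
      unfolding z_eq mat_mult_rank_one_sandwich scalar by (simp add: mat_smult_def mat_zero_def)
  qed
  have "z \<in> jacobson_radical T"
    using \<open>z \<in> T\<close> sandwich unfolding terwilliger_alg_def by (rule jacobson_radical_if_sandwich_zero)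
  moreover have "z x y \<noteq> mat_zero x y"
    unfolding z_eq mat_zero_def by simp
  ultimately show ?thesis by force
qed

lemma semisimple_T_iff:
  "semisimple_alg (T :: ('x, 'a::field) xmat set) \<longleftrightarrow> (2::'a) \<noteq> 0 \<or> (\<forall>z. swap z = z)"
  unfolding semisimple_alg_def
  using jacobson_radical_T_eq_zero jacobson_radical_T_neq_zero by blast

end

theorem theoremB:
  fixes d :: nat and R :: "nat \<Rightarrow> ('x::finite \<times> 'x) set" and x :: 'x
  assumes "is_scheme d R"
    and "quasi_thin_scheme d R"
  shows "semisimple_alg (terwilliger_alg d R x :: ('x, 'a::field) xmat set)
         \<longleftrightarrow> (CHAR('a) \<noteq> 2 \<or> (CHAR('a) = 2 \<and> thin_scheme d R))"
proof -
  interpret quasi_thin_at d R x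
    using assms by unfold_locales
  show ?thesis
    unfolding semisimple_T_iff thin_iff_swap_id two_eq_zero_iff_CHAR by blast
qed

end
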